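(* For every $n\geq1$, $$2^n\sum_{\sigma\in\mathfrak S_{n+1}}u^{{\rm rda}(\sigma)}\Bigl(-\frac12\Bigr)^{{\rm LRmin}(\sigma)+{\rm RLmin}(\sigma)-2}=\begin{cases}\bigl((1+u)^2-4\bigr)^{\lfloor n/2\rfloor},& n\text{ even},\\ -(1+u)\bigl((1+u)^2-4\bigr)^{\lfloor n/2\rfloor},& n\text{ odd}.\end{cases}$$
   Context: For $\sigma=\sigma_1\cdots\sigma_m\in\mathfrak S_m$: ${\rm rda}(\sigma)$ (right double ascents) is the number of $i$ with $1<i\le m$ and $\sigma_{i-1}<\sigma_i<\sigma_{i+1}$, with the convention $\sigma_{m+1}=+\infty$; ${\rm LRmin}(\sigma)$ is the number of $i$ with $\sigma_j>\sigma_i$ for all $j<i$; ${\rm RLmin}(\sigma)$ is the number of $i$ with $\sigma_j>\sigma_i$ for all $j>i$. *)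

theory Defs
  imports Complex_Main "HOL-Combinatorics.Multiset_Permutations"
begin

text \<open>A permutation sigma = sigma_1 ... sigma_m of {1..m} is a list; list entry s ! k
  (0-indexed) is sigma_(k+1).\<close>

text \<open>Right double ascents: positions i (1-indexed) with 1 < i <= m and
  sigma_(i-1) < sigma_i < sigma_(i+1), with sigma_(m+1) = +infinity.
  In 0-indexed form: k = i - 1 with 1 <= k < m.\<close>
definition rda :: "nat list \<Rightarrow> nat" where
  "rda s = card {k. 1 \<le> k \<and> k < length s \<and> s ! (k - 1) < s ! k \<and>
                    (k + 1 < length s \<longrightarrow> s ! k < s ! (k + 1))}"

definition LRmin :: "nat list \<Rightarrow> nat" where
  "LRmin s = card {i. i < length s \<and> (\<forall>j<i. s ! j > s ! i)}"

definition RLmin :: "nat list \<Rightarrow> nat" where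
  "RLmin s = card {i. i < length s \<and> (\<forall>j. i < j \<and> j < length s \<longrightarrow> s ! j > s ! i)}"

end

theory Submission
  imports
    Defs
    "HOL-Library.Extended"
    "HOL-Library.Infinite_Set"
    "HOL-Computational_Algebra.Formal_Power_Series"
begin

text \<open>Split a permutation at its minimum, s = a m b. The minimum is never a double ascent, and it
  acts as a boundary value -\<infinity> for the neighbouring blocks; moreover LRmin s = LRmin a + 1 and
  RLmin s = RLmin b + 1. As all statistics depend only on relative order, the weighted sums
  T (all boundaries -\<infinity>), A (left boundary +\<infinity>, weight x per left-to-right minimum) and
  B (right boundary +\<infinity>, weight y per right-to-left minimum) satisfy binomial convolution
  recurrences, i.e. differential equations for their exponential generating functions:
  T' = T^2 + (u - 1) T + 1 - u, A' = x A T and B' = y (T B + (u - 1) B). The sum in the theorem is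
  the coefficient sequence of A B for x = y = -1/2, and for this weight T cancels from the second
  derivative: (A B)'' = (u - 1)(u + 3)/4 \<cdot> A B. Hence the coefficients satisfy a two-step
  recurrence with factor ((1 + u)^2 - 4)/4.\<close>

section \<open>Double ascents relative to boundary values\<close>

fun double_ascents :: "'a::linorder extended \<Rightarrow> 'a extended \<Rightarrow> 'a list \<Rightarrow> nat" where
  "double_ascents L R [] = 0"
| "double_ascents L R [v] = of_bool (L < Fin v \<and> Fin v < R)"
| "double_ascents L R (v # w # ws) =
     of_bool (L < Fin v \<and> v < w) + double_ascents (Fin v) R (w # ws)"

lemma double_ascents_Cons:
  "double_ascents L R (v # ws) =
     of_bool (L < Fin v \<and> Fin v < (case ws of [] \<Rightarrow> R | w # _ \<Rightarrow> Fin w)) +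
     double_ascents (Fin v) R ws"
  by (cases ws) auto

lemma double_ascents_Fin_below:
  "\<forall>w\<in>set ws. m < w \<Longrightarrow> double_ascents (Fin m) R ws = double_ascents Minf R ws"
  by (cases ws) (auto simp: double_ascents_Cons)

lemma double_ascents_split_min:
  assumes "\<forall>v\<in>set a. m < v" and "\<forall>v\<in>set b. m < v"
  shows "double_ascents L R (a @ m # b) =
    double_ascents L Minf a + of_bool (a = [] \<and> L < Fin m \<and> (b = [] \<longrightarrow> Fin m < R)) +
    double_ascents Minf R b"
  using assms(1)
proof (induction a arbitrary: L)
  case Nil
  then show ?case
    using assms(2) by (cases b) (auto simp: double_ascents_Cons double_ascents_Fin_below)
next
  case (Cons v a)
  then have "m < v" "\<forall>w\<in>set a. m < w" by simp_all
  then have "double_ascents (Fin v) R (a @ m # b) =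
      double_ascents (Fin v) Minf a + double_ascents Minf R b"
    using Cons.IH[of "Fin v"] by (simp add: less_not_sym)
  moreover have "Fin v < (case a @ m # b of [] \<Rightarrow> R | w # _ \<Rightarrow> Fin w) \<longleftrightarrow>
      Fin v < (case a of [] \<Rightarrow> Minf | w # _ \<Rightarrow> Fin w)"
    using \<open>m < v\<close> by (cases a) (simp_all add: less_not_sym)
  ultimately show ?case by (simp add: double_ascents_Cons)
qed

lemma double_ascents_map:
  assumes "strict_mono_on A f" "set s \<subseteq> A" "set_extended L \<subseteq> A" "set_extended R \<subseteq> A"
  shows "double_ascents (map_extended f L) (map_extended f R) (map f s) = double_ascents L R s"
  using assms(2-)
proof (induction L R s rule: double_ascents.induct)
  case (2 L R v)
  then show ?case using strict_mono_on_less[OF assms(1)] by (cases L; cases R) auto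
next
  case (3 L R v w ws)
  then show ?case using strict_mono_on_less[OF assms(1)] by (cases L) auto
qed simp

lemma double_ascents_conv_sum:
  "double_ascents L R s = (let xs = L # map Fin s @ [R] in
     \<Sum>k<length s. of_bool (xs ! k < xs ! Suc k \<and> xs ! Suc k < xs ! Suc (Suc k)))"
proof (induction s arbitrary: L)
  case (Cons v ws)
  then show ?case
    by (simp only: Let_def double_ascents_Cons length_Cons sum.lessThan_Suc_shift) (cases ws; simp)
qed simp

lemma rda_eq_double_ascents: "rda s = double_ascents Pinf Pinf s"
proof -
  define xs where "xs = Pinf # map Fin s @ [Pinf]"
  have "xs ! k < xs ! Suc k \<and> xs ! Suc k < xs ! Suc (Suc k) \<longleftrightarrow>
      1 \<le> k \<and> s ! (k - 1) < s ! k \<and> (k + 1 < length s \<longrightarrow> s ! k < s ! (k + 1))"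
    if "k < length s" for k
    using that by (cases k) (auto simp: xs_def nth_append)
  then have "rda s =
      card ({..<length s} \<inter> {k. xs ! k < xs ! Suc k \<and> xs ! Suc k < xs ! Suc (Suc k)})"
    unfolding rda_def by (intro arg_cong[where f = card]) auto
  then show ?thesis
    by (simp add: double_ascents_conv_sum xs_def Let_def)
qed

lemma LRmin_append_min:
  assumes "\<forall>v\<in>set a. m < v" and "\<forall>v\<in>set b. m < v"
  shows "LRmin (a @ m # b) = Suc (LRmin a)"
proof -
  let ?s = "a @ m # b"
  have "{i. i < length ?s \<and> (\<forall>j<i. ?s ! j > ?s ! i)} =
      insert (length a) {i. i < length a \<and> (\<forall>j<i. a ! j > a ! i)}"
  proof (intro set_eqI iffI)
    fix i assume i: "i \<in> {i. i < length ?s \<and> (\<forall>j<i. ?s ! j > ?s ! i)}"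
    show "i \<in> insert (length a) {i. i < length a \<and> (\<forall>j<i. a ! j > a ! i)}"
    proof (cases "length a < i")
      case True
      then have "?s ! i \<in> set b" using i by (auto simp: nth_append)
      then show ?thesis using i True assms(2) by (auto dest!: spec[of _ "length a"])
    qed (use i in \<open>auto simp: nth_append\<close>)
  qed (use assms(1) in \<open>auto simp: nth_append\<close>)
  then show ?thesis
    unfolding LRmin_def by simp
qed

lemma card_reflect_lessThan:
  "card {i. i < n \<and> P (n - Suc i)} = card {i. i < n \<and> P i}"
proof -
  have "inj_on (\<lambda>i. n - Suc i) {i. i < n \<and> P (n - Suc i)}"
    by (auto simp: inj_on_def)
  moreover have "(\<lambda>i. n - Suc i) ` {i. i < n \<and> P (n - Suc i)} = {i. i < n \<and> P i}"
  proof (intro set_eqI iffI)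
    fix i assume "i \<in> {i. i < n \<and> P i}"
    then show "i \<in> (\<lambda>i. n - Suc i) ` {i. i < n \<and> P (n - Suc i)}"
      by (intro image_eqI[of _ _ "n - Suc i"]) auto
  qed auto
  ultimately show ?thesis
    by (metis card_image)
qed

lemma rev_LR_minimum_iff_RL_minimum:
  assumes "i < length s"
  shows "(\<forall>j<i. rev s ! j > rev s ! i) \<longleftrightarrow>
    (\<forall>j. length s - Suc i < j \<and> j < length s \<longrightarrow> s ! j > s ! (length s - Suc i))"
    (is "?LR \<longleftrightarrow> ?RL")
proof
  assume ?LR
  show ?RL
  proof (intro allI impI)
    fix j assume j: "length s - Suc i < j \<and> j < length s"
    then have "length s - Suc j < i"
      using assms by arith
    then have "rev s ! (length s - Suc j) > rev s ! i"
      using \<open>?LR\<close> by blast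
    then show "s ! j > s ! (length s - Suc i)"
      using j assms by (simp add: rev_nth)
  qed
next
  assume ?RL
  show ?LR
  proof (intro allI impI)
    fix j assume "j < i"
    then have "length s - Suc i < length s - Suc j \<and> length s - Suc j < length s"
      using assms by arith
    then have "s ! (length s - Suc j) > s ! (length s - Suc i)"
      using \<open>?RL\<close> by blast
    then show "rev s ! j > rev s ! i"
      using \<open>j < i\<close> assms by (simp add: rev_nth)
  qed
qed

lemma RLmin_eq_LRmin_rev: "RLmin s = LRmin (rev s)"
proof -
  let ?n = "length s"
  have "LRmin (rev s) =
      card {i. i < ?n \<and> (\<forall>j. ?n - Suc i < j \<and> j < ?n \<longrightarrow> s ! j > s ! (?n - Suc i))}"
    unfolding LRmin_def using rev_LR_minimum_iff_RL_minimum
    by (intro arg_cong[where f = card]) auto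
  also have "\<dots> = RLmin s"
    unfolding RLmin_def
    by (rule card_reflect_lessThan[where P = "\<lambda>i. \<forall>j. i < j \<and> j < ?n \<longrightarrow> s ! j > s ! i"])
  finally show ?thesis ..
qed

lemma RLmin_append_min:
  assumes "\<forall>v\<in>set a. m < v" and "\<forall>v\<in>set b. m < v"
  shows "RLmin (a @ m # b) = Suc (RLmin b)"
  using LRmin_append_min[of "rev b" m "rev a"] assms by (simp add: RLmin_eq_LRmin_rev)

lemma LRmin_pos: "s \<noteq> [] \<Longrightarrow> 0 < LRmin s"
  unfolding LRmin_def by (subst card_gt_0_iff) auto

lemma RLmin_pos: "s \<noteq> [] \<Longrightarrow> 0 < RLmin s"
  by (simp add: RLmin_eq_LRmin_rev LRmin_pos)

section \<open>Sums over permutations of statistics depending only on relative order\<close>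

definition order_invariant :: "(nat list \<Rightarrow> 'b) \<Rightarrow> bool" where
  "order_invariant w \<longleftrightarrow> (\<forall>f s. strict_mono_on (set s) f \<longrightarrow> w (map f s) = w s)"

lemma order_invariant_mult:
  "order_invariant v \<Longrightarrow> order_invariant w \<Longrightarrow> order_invariant (\<lambda>s. v s * w s)"
  by (simp add: order_invariant_def)

lemma order_invariant_power: "order_invariant w \<Longrightarrow> order_invariant (\<lambda>s. c ^ w s)"
  by (simp add: order_invariant_def)

lemma order_invariant_double_ascents:
  assumes "L \<in> {Minf, Pinf}" and "R \<in> {Minf, Pinf}"
  shows "order_invariant (double_ascents L R)"
  unfolding order_invariant_def
proof (intro allI impI)
  fix f :: "nat \<Rightarrow> nat" and s assume "strict_mono_on (set s) f"
  then show "double_ascents L R (map f s) = double_ascents L R s"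
    using double_ascents_map[of "set s" f s L R] assms by auto
qed

lemma order_invariant_LRmin: "order_invariant LRmin"
  unfolding order_invariant_def
proof (intro allI impI)
  fix f :: "nat \<Rightarrow> nat" and s :: "nat list" assume mono: "strict_mono_on (set s) f"
  have "f (s ! j) > f (s ! i) \<longleftrightarrow> s ! j > s ! i" if "i < length s" "j < length s" for i j
    using strict_mono_on_less[OF mono] that by simp
  then show "LRmin (map f s) = LRmin s"
    unfolding LRmin_def by (intro arg_cong[where f = card]) auto
qed

lemma order_invariant_RLmin: "order_invariant RLmin"
  unfolding order_invariant_def RLmin_eq_LRmin_rev
proof (intro allI impI)
  fix f :: "nat \<Rightarrow> nat" and s :: "nat list" assume "strict_mono_on (set s) f"
  then show "LRmin (rev (map f s)) = LRmin (rev s)"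
    using order_invariant_LRmin by (simp add: order_invariant_def rev_map)
qed

definition perm_sum :: "(nat list \<Rightarrow> 'b::comm_monoid_add) \<Rightarrow> nat \<Rightarrow> 'b" where
  "perm_sum w n = (\<Sum>s\<in>permutations_of_set {..<n}. w s)"

lemma perm_sum_0 [simp]: "perm_sum w 0 = w []"
  by (simp add: perm_sum_def)

lemma sum_permutations_of_set_relabel:
  assumes "finite S" and "order_invariant g"
  shows "(\<Sum>s\<in>permutations_of_set S. g s) = perm_sum g (card S)"
proof -
  obtain h where bij: "bij_betw h {..<card S} S" and mono: "strict_mono_on {..<card S} h"
    using ex_bij_betw_strict_mono_card[OF assms(1)] .
  have inj: "inj_on h {..<card S}"
    using bij by (rule bij_betw_imp_inj_on)
  have "permutations_of_set S = map h ` permutations_of_set {..<card S}"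
    using permutations_of_set_image_inj[OF inj] bij_betw_imp_surj_on[OF bij] by simp
  moreover have "inj_on (map h) (permutations_of_set {..<card S})"
  proof (rule inj_onI)
    fix s t assume st: "s \<in> permutations_of_set {..<card S}" "t \<in> permutations_of_set {..<card S}"
      and "map h s = map h t"
    have "inj_on h (set s \<union> set t)"
      using inj permutations_of_setD(1)[OF st(1)] permutations_of_setD(1)[OF st(2)] by simp
    then show "s = t"
      by (rule map_inj_on[OF \<open>map h s = map h t\<close>])
  qed
  moreover have "g (map h s) = g s" if "s \<in> permutations_of_set {..<card S}" for s
    using assms(2) mono permutations_of_setD(1)[OF that] unfolding order_invariant_def by simp
  ultimately show ?thesis
    unfolding perm_sum_def by (simp add: sum.reindex)
qed

lemma sum_permutations_of_set_split:
  fixes g :: "'a list \<Rightarrow> 'b::comm_monoid_add"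
  assumes "finite S" and "m \<in> S"
  shows "(\<Sum>s\<in>permutations_of_set S. g s) =
    (\<Sum>X\<in>Pow (S - {m}). \<Sum>a\<in>permutations_of_set X.
       \<Sum>b\<in>permutations_of_set (S - {m} - X). g (a @ m # b))"
proof -
  let ?T = "SIGMA X:Pow (S - {m}). permutations_of_set X \<times> permutations_of_set (S - {m} - X)"
  let ?join = "\<lambda>(X :: 'a set, a, b). a @ m # b"
  have "inj_on ?join ?T"
  proof (rule inj_onI)
    fix z z' assume "z \<in> ?T" "z' \<in> ?T" and eq: "?join z = ?join z'"
    obtain X a b X' a' b' where z: "z = (X, a, b)" and z': "z' = (X', a', b')"
      by (metis prod_cases3)
    have "set a = X" "set a' = X'" "m \<notin> set a" "m \<notin> set b"
      using \<open>z \<in> ?T\<close> \<open>z' \<in> ?T\<close> unfolding z z' by (auto dest: permutations_of_setD)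
    moreover have "a = a' \<and> b = b'"
      using eq append_Cons_eq_iff[OF \<open>m \<notin> set a\<close> \<open>m \<notin> set b\<close>] unfolding z z' by simp
    ultimately show "z = z'"
      unfolding z z' by simp
  qed
  moreover have "?join ` ?T = permutations_of_set S"
  proof (intro set_eqI iffI)
    fix s assume "s \<in> ?join ` ?T"
    then obtain X a b where s: "s = a @ m # b" and "(X, a, b) \<in> ?T" by auto
    then have "set a = X" "distinct a" "set b = S - {m} - X" "distinct b" "X \<subseteq> S - {m}"
      by (auto dest: permutations_of_setD)
    then show "s \<in> permutations_of_set S"
      using assms(2) unfolding s by (intro permutations_of_setI) auto
  next
    fix s assume s: "s \<in> permutations_of_set S"
    then have "m \<in> set s" using assms(2) by (simp add: permutations_of_setD)
    then obtain a b where ab: "s = a @ m # b" by (meson split_list)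
    have "set s = S" "distinct s"
      using s by (auto dest: permutations_of_setD)
    then have "(set a, a, b) \<in> ?T"
      unfolding ab by (auto intro!: permutations_of_setI)
    then show "s \<in> ?join ` ?T"
      unfolding ab by (rule rev_image_eqI) simp
  qed
  ultimately have "(\<Sum>s\<in>permutations_of_set S. g s) = (\<Sum>z\<in>?T. g (?join z))"
    using sum.reindex[of ?join ?T g] by simp
  also have "\<dots> = (\<Sum>X\<in>Pow (S - {m}).
      \<Sum>(a, b)\<in>permutations_of_set X \<times> permutations_of_set (S - {m} - X). g (a @ m # b))"
    using assms(1) by (subst sum.Sigma) (auto simp: split_beta)
  finally show ?thesis
    by (simp add: sum.cartesian_product)
qed

lemma sum_Pow_card:
  fixes h :: "nat \<Rightarrow> 'b::comm_semiring_1"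
  assumes "finite S"
  shows "(\<Sum>X\<in>Pow S. h (card X)) = (\<Sum>k\<le>card S. of_nat (card S choose k) * h k)"
proof -
  have "(\<Sum>X\<in>Pow S. h (card X)) = (\<Sum>k\<le>card S. \<Sum>X\<in>{X. X \<in> Pow S \<and> card X = k}. h (card X))"
    by (rule sum.group[symmetric]) (use assms in \<open>auto intro: card_mono\<close>)
  also have "\<dots> = (\<Sum>k\<le>card S. of_nat (card {X. X \<subseteq> S \<and> card X = k}) * h k)"
    by (intro sum.cong refl) simp
  finally show ?thesis
    by (simp only: n_subsets[OF assms])
qed

lemma perm_sum_Suc:
  fixes g w1 w2 :: "nat list \<Rightarrow> 'b::comm_semiring_1" and c :: "nat \<Rightarrow> nat \<Rightarrow> 'b"
  assumes "order_invariant w1" and "order_invariant w2"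
    and split: "\<And>a b. \<forall>v\<in>set a. 0 < v \<Longrightarrow> \<forall>v\<in>set b. 0 < v \<Longrightarrow>
      g (a @ 0 # b) = w1 a * w2 b * c (length a) (length b)"
  shows "perm_sum g (Suc n) =
    (\<Sum>k\<le>n. of_nat (n choose k) * (perm_sum w1 k * perm_sum w2 (n - k) * c k (n - k)))"
proof -
  let ?S = "{..<Suc n} - {0}"
  have card_S: "card ?S = n" by simp
  have "perm_sum g (Suc n) =
      (\<Sum>X\<in>Pow ?S. \<Sum>a\<in>permutations_of_set X. \<Sum>b\<in>permutations_of_set (?S - X). g (a @ 0 # b))"
    unfolding perm_sum_def by (rule sum_permutations_of_set_split) auto
  also have "\<dots> =
      (\<Sum>X\<in>Pow ?S. perm_sum w1 (card X) * perm_sum w2 (n - card X) * c (card X) (n - card X))"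
  proof (rule sum.cong[OF refl])
    fix X assume "X \<in> Pow ?S"
    then have X: "X \<subseteq> ?S" "finite X" by (auto intro: finite_subset)
    have card_rest: "card (?S - X) = n - card X"
      using card_Diff_subset[OF X(2,1)] by simp
    have "g (a @ 0 # b) = w1 a * w2 b * c (card X) (n - card X)"
      if "a \<in> permutations_of_set X" "b \<in> permutations_of_set (?S - X)" for a b
    proof -
      have "set a = X" "set b = ?S - X" "length a = card X" "length b = card (?S - X)"
        using that X(2) by (auto dest: permutations_of_setD length_finite_permutations_of_set)
      then show ?thesis
        using X(1) card_rest by (subst split) auto
    qed
    then have "(\<Sum>a\<in>permutations_of_set X. \<Sum>b\<in>permutations_of_set (?S - X). g (a @ 0 # b)) =
        (\<Sum>a\<in>permutations_of_set X. \<Sum>b\<in>permutations_of_set (?S - X).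
          w1 a * w2 b * c (card X) (n - card X))"
      by (intro sum.cong refl) simp
    also have "\<dots> = (\<Sum>a\<in>permutations_of_set X. w1 a) *
        (\<Sum>b\<in>permutations_of_set (?S - X). w2 b) * c (card X) (n - card X)"
      by (subst sum_product) (simp only: sum_distrib_right)
    also have "\<dots> = perm_sum w1 (card X) * perm_sum w2 (n - card X) * c (card X) (n - card X)"
      using X(2) assms(1,2) card_rest by (simp add: sum_permutations_of_set_relabel)
    finally show "(\<Sum>a\<in>permutations_of_set X. \<Sum>b\<in>permutations_of_set (?S - X). g (a @ 0 # b)) = \<dots>" .
  qed
  also have "\<dots> = (\<Sum>k\<le>n. of_nat (n choose k) * (perm_sum w1 k * perm_sum w2 (n - k) * c k (n - k)))"
    using sum_Pow_card[of ?S "\<lambda>k. perm_sum w1 k * perm_sum w2 (n - k) * c k (n - k)"] card_S by simp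
  finally show ?thesis .
qed

section \<open>Exponential generating functions\<close>

definition binomial_conv :: "(nat \<Rightarrow> 'a::comm_semiring_1) \<Rightarrow> (nat \<Rightarrow> 'a) \<Rightarrow> nat \<Rightarrow> 'a" where
  "binomial_conv f g n = (\<Sum>k\<le>n. of_nat (n choose k) * (f k * g (n - k)))"

lemma binomial_conv_bump_first:
  fixes f g :: "nat \<Rightarrow> 'a::comm_ring_1"
  shows "(\<Sum>k\<le>n. of_nat (n choose k) * (f k * g (n - k) * (if k = 0 then w else 1))) =
    binomial_conv f g n + (w - 1) * f 0 * g n"
proof -
  have "(\<Sum>k\<le>n. of_nat (n choose k) * (f k * g (n - k) * (if k = 0 then w else 1))) =
      (\<Sum>k\<le>n. of_nat (n choose k) * (f k * g (n - k)) + (if k = 0 then (w - 1) * f 0 * g n else 0))"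
    by (intro sum.cong refl) (simp add: algebra_simps)
  then show ?thesis
    by (simp add: sum.distrib binomial_conv_def)
qed

definition egf :: "(nat \<Rightarrow> 'a::field_char_0) \<Rightarrow> 'a fps" where
  "egf f = Abs_fps (\<lambda>n. f n / fact n)"

lemma egf_nth [simp]: "fps_nth (egf f) n = f n / fact n"
  by (simp add: egf_def)

lemma egf_inject: "egf f = egf g \<longleftrightarrow> f = g"
proof
  assume "egf f = egf g"
  then have "f n / fact n = g n / fact n" for n
    by (metis egf_nth)
  then show "f = g"
    by (simp add: fun_eq_iff)
qed simp

lemma egf_add: "egf (\<lambda>n. f n + g n) = egf f + egf g"
  by (rule fps_ext) (simp add: add_divide_distrib)

lemma egf_scale: "egf (\<lambda>n. c * f n) = fps_const c * egf f"
  by (rule fps_ext) simp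

lemma egf_const: "egf (\<lambda>n. if n = 0 then c else 0) = fps_const c"
  by (rule fps_ext) simp

lemma fps_deriv_egf: "fps_deriv (egf f) = egf (\<lambda>n. f (Suc n))"
  by (rule fps_ext) (simp add: field_simps del: of_nat_Suc)

lemma egf_mult: "egf f * egf g = egf (binomial_conv f g)"
proof (rule fps_ext)
  fix n
  have "fps_nth (egf f * egf g) n = (\<Sum>k\<le>n. f k / fact k * (g (n - k) / fact (n - k)))"
    by (simp add: fps_mult_nth atLeast0AtMost)
  also have "\<dots> = (\<Sum>k\<le>n. of_nat (n choose k) * (f k * g (n - k)) / fact n)"
    by (intro sum.cong refl) (simp add: binomial_fact field_simps)
  also have "\<dots> = binomial_conv f g n / fact n"
    by (simp add: binomial_conv_def sum_divide_distrib)
  finally show "fps_nth (egf f * egf g) n = fps_nth (egf (binomial_conv f g)) n"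
    by simp
qed

section \<open>Recurrences and differential equations for the weighted sums\<close>

definition dasc_sum :: "real \<Rightarrow> nat \<Rightarrow> real" where
  "dasc_sum u = perm_sum (\<lambda>s. u ^ double_ascents Minf Minf s)"

definition dasc_LRmin_sum :: "real \<Rightarrow> real \<Rightarrow> nat \<Rightarrow> real" where
  "dasc_LRmin_sum u x = perm_sum (\<lambda>s. u ^ double_ascents Pinf Minf s * x ^ LRmin s)"

definition dasc_RLmin_sum :: "real \<Rightarrow> real \<Rightarrow> nat \<Rightarrow> real" where
  "dasc_RLmin_sum u y = perm_sum (\<lambda>s. u ^ double_ascents Minf Pinf s * y ^ RLmin s)"

lemma dasc_sum_0: "dasc_sum u 0 = 1"
  and dasc_LRmin_sum_0: "dasc_LRmin_sum u x 0 = 1"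
  and dasc_RLmin_sum_0: "dasc_RLmin_sum u y 0 = 1"
  by (simp_all add: dasc_sum_def dasc_LRmin_sum_def dasc_RLmin_sum_def LRmin_def RLmin_def)

lemma dasc_sum_Suc:
  "dasc_sum u (Suc n) =
    binomial_conv (dasc_sum u) (dasc_sum u) n + (if n = 0 then 0 else (u - 1) * dasc_sum u n)"
proof -
  have "dasc_sum u (Suc n) = (\<Sum>k\<le>n. of_nat (n choose k) *
      (dasc_sum u k * dasc_sum u (n - k) * (if k = 0 \<and> n - k \<noteq> 0 then u else 1)))"
    unfolding dasc_sum_def
    by (rule perm_sum_Suc)
       (auto intro!: order_invariant_power order_invariant_double_ascents
             simp: double_ascents_split_min power_add)
  also have "\<dots> = (\<Sum>k\<le>n. of_nat (n choose k) *
      (dasc_sum u k * dasc_sum u (n - k) * (if k = 0 then if n = 0 then 1 else u else 1)))"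
    by (intro sum.cong refl) auto
  finally show ?thesis
    by (simp add: binomial_conv_bump_first dasc_sum_0)
qed

lemma dasc_LRmin_sum_Suc:
  "dasc_LRmin_sum u x (Suc n) = x * binomial_conv (dasc_LRmin_sum u x) (dasc_sum u) n"
proof -
  have "dasc_LRmin_sum u x (Suc n) = (\<Sum>k\<le>n. of_nat (n choose k) *
      (dasc_LRmin_sum u x k * dasc_sum u (n - k) * x))"
    unfolding dasc_LRmin_sum_def dasc_sum_def
    by (rule perm_sum_Suc)
       (auto intro!: order_invariant_mult order_invariant_power order_invariant_double_ascents
             order_invariant_LRmin simp: double_ascents_split_min LRmin_append_min power_add)
  then show ?thesis
    by (simp add: binomial_conv_def sum_distrib_left mult_ac)
qed

lemma dasc_RLmin_sum_Suc:
  "dasc_RLmin_sum u y (Suc n) =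
    y * (binomial_conv (dasc_sum u) (dasc_RLmin_sum u y) n + (u - 1) * dasc_RLmin_sum u y n)"
proof -
  have "dasc_RLmin_sum u y (Suc n) = (\<Sum>k\<le>n. of_nat (n choose k) *
      (dasc_sum u k * dasc_RLmin_sum u y (n - k) * (y * (if k = 0 then u else 1))))"
    unfolding dasc_RLmin_sum_def dasc_sum_def
    by (rule perm_sum_Suc)
       (auto intro!: order_invariant_mult order_invariant_power order_invariant_double_ascents
             order_invariant_RLmin simp: double_ascents_split_min RLmin_append_min power_add)
  also have "\<dots> = y * (\<Sum>k\<le>n. of_nat (n choose k) *
      (dasc_sum u k * dasc_RLmin_sum u y (n - k) * (if k = 0 then u else 1)))"
    by (simp add: sum_distrib_left mult_ac)
  finally show ?thesis
    by (simp add: binomial_conv_bump_first dasc_sum_0)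
qed

lemma perm_sum_dasc_LRmin_RLmin_Suc:
  "perm_sum (\<lambda>s. u ^ double_ascents Pinf Pinf s * x ^ LRmin s * y ^ RLmin s) (Suc n) =
    x * y * binomial_conv (dasc_LRmin_sum u x) (dasc_RLmin_sum u y) n"
proof -
  have "perm_sum (\<lambda>s. u ^ double_ascents Pinf Pinf s * x ^ LRmin s * y ^ RLmin s) (Suc n) =
      (\<Sum>k\<le>n. of_nat (n choose k) * (dasc_LRmin_sum u x k * dasc_RLmin_sum u y (n - k) * (x * y)))"
    unfolding dasc_LRmin_sum_def dasc_RLmin_sum_def
    by (rule perm_sum_Suc)
       (auto intro!: order_invariant_mult order_invariant_power order_invariant_double_ascents
             order_invariant_LRmin order_invariant_RLmin
             simp: double_ascents_split_min LRmin_append_min RLmin_append_min power_add)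
  then show ?thesis
    by (simp add: binomial_conv_def sum_distrib_left mult_ac)
qed

lemma fps_deriv_egf_dasc_sum:
  "fps_deriv (egf (dasc_sum u)) =
    egf (dasc_sum u) * egf (dasc_sum u) + fps_const (u - 1) * egf (dasc_sum u) + fps_const (1 - u)"
proof -
  have "(\<lambda>n. dasc_sum u (Suc n)) =
      (\<lambda>n. binomial_conv (dasc_sum u) (dasc_sum u) n + (u - 1) * dasc_sum u n +
        (if n = 0 then 1 - u else 0))"
    by (rule ext) (simp add: dasc_sum_Suc dasc_sum_0)
  then show ?thesis
    by (simp add: fps_deriv_egf egf_add egf_scale egf_const egf_mult)
qed

lemma fps_deriv_egf_dasc_LRmin_sum:
  "fps_deriv (egf (dasc_LRmin_sum u x)) =
    fps_const x * (egf (dasc_LRmin_sum u x) * egf (dasc_sum u))"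
  by (simp add: fps_deriv_egf dasc_LRmin_sum_Suc egf_scale egf_mult)

lemma fps_deriv_egf_dasc_RLmin_sum:
  "fps_deriv (egf (dasc_RLmin_sum u y)) =
    fps_const y *
      (egf (dasc_sum u) * egf (dasc_RLmin_sum u y) + fps_const (u - 1) * egf (dasc_RLmin_sum u y))"
  by (simp add: fps_deriv_egf dasc_RLmin_sum_Suc egf_scale egf_add egf_mult)

text \<open>The weight -1/2 is exactly the one for which the terms involving T cancel.\<close>

lemma fps_deriv_deriv_mult_riccati:
  fixes T A B :: "'a::field_char_0 fps"
  assumes T: "fps_deriv T = T * T + fps_const (c - 1) * T + fps_const (1 - c)"
    and A: "fps_deriv A = fps_const (- 1 / 2) * (A * T)"
    and B: "fps_deriv B = fps_const (- 1 / 2) * (T * B + fps_const (c - 1) * B)"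
  shows "fps_deriv (fps_deriv (A * B)) = fps_const ((c - 1) * (c + 3) / 4) * (A * B)"
proof -
  let ?h = "fps_const (- 1 / 2) :: 'a fps" and ?w = "fps_const (c - 1) :: 'a fps"
  have h: "?h + ?h = - 1"
    by (rule fps_ext) simp
  have w: "fps_const (1 - c) = - ?w"
    by simp
  have "(c - 1) * (c + 3) / 4 = (c - 1) + (- 1 / 2) * (- 1 / 2) * (c - 1) * (c - 1)"
    by (simp add: field_simps)
  then have const: "fps_const ((c - 1) * (c + 3) / 4) = ?w + ?h * ?h * ?w * ?w"
    by (simp only: fps_const_mult [symmetric] fps_const_add [symmetric])
  have AB: "fps_deriv (A * B) = ?h * (A * B * (T + T + ?w))"
    by (simp only: fps_deriv_mult A B) (simp add: algebra_simps)
  have "fps_deriv (fps_deriv (A * B)) = fps_deriv (?h * (A * B * (T + T + ?w)))"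
    by (simp only: AB)
  also have "\<dots> = ?h * (A * B * (fps_deriv T + fps_deriv T) + fps_deriv (A * B) * (T + T + ?w))"
    by (simp only: fps_deriv_mult_const_left fps_deriv_mult[of "A * B"] fps_deriv_add
        fps_deriv_const add_0_right)
  also have "\<dots> = fps_const ((c - 1) * (c + 3) / 4) * (A * B)"
    unfolding const AB T w using h by algebra
  finally show ?thesis .
qed

definition dasc_min_conv :: "real \<Rightarrow> nat \<Rightarrow> real" where
  "dasc_min_conv u = binomial_conv (dasc_LRmin_sum u (- 1 / 2)) (dasc_RLmin_sum u (- 1 / 2))"

lemma dasc_min_conv_Suc_Suc:
  "dasc_min_conv u (Suc (Suc n)) = (u - 1) * (u + 3) / 4 * dasc_min_conv u n"
proof -
  have "egf (\<lambda>n. dasc_min_conv u (Suc (Suc n))) = fps_deriv (fps_deriv (egf (dasc_min_conv u)))"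
    by (simp add: fps_deriv_egf)
  also have "\<dots> = fps_const ((u - 1) * (u + 3) / 4) * egf (dasc_min_conv u)"
    unfolding dasc_min_conv_def egf_mult [symmetric]
    by (rule fps_deriv_deriv_mult_riccati[OF fps_deriv_egf_dasc_sum
          fps_deriv_egf_dasc_LRmin_sum fps_deriv_egf_dasc_RLmin_sum])
  also have "\<dots> = egf (\<lambda>n. (u - 1) * (u + 3) / 4 * dasc_min_conv u n)"
    by (rule egf_scale [symmetric])
  finally have "(\<lambda>n. dasc_min_conv u (Suc (Suc n))) =
      (\<lambda>n. (u - 1) * (u + 3) / 4 * dasc_min_conv u n)"
    by (simp only: egf_inject)
  then show ?thesis
    by (rule fun_cong)
qed

lemma dasc_min_conv_0: "dasc_min_conv u 0 = 1"
  and dasc_min_conv_1: "dasc_min_conv u (Suc 0) = - (1 + u) / 2"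
  by (simp_all add: dasc_min_conv_def binomial_conv_def dasc_LRmin_sum_Suc[where n = 0]
      dasc_RLmin_sum_Suc[where n = 0] dasc_sum_0 dasc_LRmin_sum_0 dasc_RLmin_sum_0)

lemma dasc_min_conv_closed_form:
  "2 ^ n * dasc_min_conv u n =
    (if even n then ((1 + u)\<^sup>2 - 4) ^ (n div 2) else - (1 + u) * ((1 + u)\<^sup>2 - 4) ^ (n div 2))"
proof (induction n rule: nat_induct2)
  case (step n)
  have "2 ^ (n + 2) * dasc_min_conv u (n + 2) = ((1 + u)\<^sup>2 - 4) * (2 ^ n * dasc_min_conv u n)"
    by (simp add: dasc_min_conv_Suc_Suc power2_eq_square field_simps)
  then show ?case
    using step by simp
qed (simp_all add: dasc_min_conv_0 dasc_min_conv_1)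

lemma sum_rda_LRmin_RLmin:
  "(\<Sum>s\<in>permutations_of_set {1..n+1}. u ^ rda s * (- 1 / 2) ^ (LRmin s + RLmin s - 2)) =
    dasc_min_conv u n"
proof -
  let ?w = "\<lambda>s. u ^ double_ascents Pinf Pinf s * (- 1 / 2) ^ LRmin s * (- 1 / 2 :: real) ^ RLmin s"
  have "u ^ rda s * (- 1 / 2) ^ (LRmin s + RLmin s - 2) = 4 * ?w s"
    if "s \<in> permutations_of_set {1..n+1}" for s
  proof -
    have "s \<noteq> []" using that by (auto dest: permutations_of_setD)
    then obtain l r where "LRmin s = Suc l" "RLmin s = Suc r"
      using LRmin_pos RLmin_pos by (metis gr0_implies_Suc)
    then show ?thesis
      by (simp add: rda_eq_double_ascents power_add)
  qed
  then have "(\<Sum>s\<in>permutations_of_set {1..n+1}. u ^ rda s * (- 1 / 2) ^ (LRmin s + RLmin s - 2)) =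
      4 * (\<Sum>s\<in>permutations_of_set {1..n+1}. ?w s)"
    by (simp add: sum_distrib_left)
  also have "\<dots> = 4 * perm_sum ?w (Suc n)"
    by (subst sum_permutations_of_set_relabel)
       (auto intro!: order_invariant_mult order_invariant_power order_invariant_double_ascents
         order_invariant_LRmin order_invariant_RLmin)
  also have "\<dots> = dasc_min_conv u n"
    by (simp add: perm_sum_dasc_LRmin_RLmin_Suc dasc_min_conv_def)
  finally show ?thesis .
qed

theorem theorem1p8:
  fixes n :: nat and u :: real
  assumes "n \<ge> 1"
  shows "2 ^ n * (\<Sum>s\<in>permutations_of_set {1..n+1}.
            u ^ rda s * (- 1 / 2) ^ (LRmin s + RLmin s - 2)) =
         (if even n then ((1 + u)\<^sup>2 - 4) ^ (n div 2)
          else - (1 + u) * ((1 + u)\<^sup>2 - 4) ^ (n div 2))"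
  unfolding sum_rda_LRmin_RLmin by (rule dasc_min_conv_closed_form)

end
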